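(* Let $\lambda>0$ and let $\{x_n\}$ be a sequence of positive real numbers satisfying $$\lim_{n\to\infty}x_n=0\quad\text{and}\quad\lim_{n\to\infty}\frac{\ln x_n}{\sum_{i=1}^nx_i^\lambda}=-b<0.$$ Then $$\lim_{n\to\infty}\frac{\ln x_n}{\ln n}=-\frac1\lambda.$$ *)

theory Defs
  imports "HOL-Analysis.Analysis"
begin

end

theory Submission
  imports Defs
begin

(* Put y n = x n powr lambda, let S n be its partial sums and c = lambda * b. The hypothesis says
   y n = exp (- (c + o(1)) * S n). For a < c eventually y (n+1) <= exp (- a * S (n+1)), so by
   convexity of exp the increments of exp (a * S n) are at most a and it grows at most linearly;
   for a > c (using y n <= 1) they are at least a * exp (- a), so it grows at least linearly.
   Hence S n / ln n tends to 1 / c, and ln (x n) / ln n = (ln (x n) / S n) * (S n / ln n)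
   tends to - b / c = - 1 / lambda. *)

lemma exp_diff_le_mult_exp:
  fixes u v :: real
  shows "exp u - exp v \<le> (u - v) * exp u"
proof -
  have "(1 + (v - u)) * exp u \<le> exp (v - u) * exp u"
    by (rule mult_right_mono[OF exp_ge_add_one_self]) simp
  then show ?thesis by (simp add: algebra_simps flip: exp_add)
qed

lemma bounded_increments_imp_le_linear:
  fixes f :: "nat \<Rightarrow> real"
  assumes "\<And>k. k \<ge> N \<Longrightarrow> f (Suc k) - f k \<le> D" and "n \<ge> N"
  shows "f n \<le> f N + D * (real n - real N)"
  using assms(2)
proof (induction n rule: dec_induct)
  case (step n)
  then show ?case using assms(1)[of n] by (simp add: algebra_simps)
qed simp

lemma tendsto_ln_plus_const_div_ln:
  assumes "a \<noteq> 0"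
  shows "(\<lambda>n. (ln (real n) + C) / (a * ln (real n))) \<longlonglongrightarrow> 1 / a"
proof -
  have "(\<lambda>n. C / a / ln (real n)) \<longlonglongrightarrow> 0"
    by (intro tendsto_divide_0[OF tendsto_const] filterlim_at_top_imp_at_infinity
        filterlim_compose[OF ln_at_top filterlim_real_sequentially])
  then have "(\<lambda>n. 1 / a + C / a / ln (real n)) \<longlonglongrightarrow> 1 / a"
    using tendsto_add[OF tendsto_const] by fastforce
  moreover have "eventually (\<lambda>n. 1 / a + C / a / ln (real n) = (ln (real n) + C) / (a * ln (real n))) sequentially"
    using eventually_gt_at_top[of 1]
  proof eventually_elim
    case (elim n)
    then have "ln (real n) > 0" by simp
    then show ?case using assms by (simp add: field_simps)
  qed
  ultimately show ?thesis by (rule Lim_transform_eventually)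
qed

lemma partial_sums_upper_ln_bound:
  fixes y S :: "nat \<Rightarrow> real"
  assumes "a > 0" and S_Suc: "\<And>n. S (Suc n) = S n + y (Suc n)"
    and "eventually (\<lambda>n. y n \<le> exp (- a * S n)) sequentially"
  shows "\<exists>C. eventually (\<lambda>n. a * S n \<le> ln (real n) + C) sequentially"
proof -
  obtain N where N: "\<And>n. n \<ge> N \<Longrightarrow> y n \<le> exp (- a * S n)"
    using assms(3) by (auto simp: eventually_sequentially)
  have step: "exp (a * S (Suc n)) - exp (a * S n) \<le> a" if "n \<ge> N" for n
  proof -
    have "exp (a * S (Suc n)) - exp (a * S n) \<le> a * y (Suc n) * exp (a * S (Suc n))"
      using exp_diff_le_mult_exp[of "a * S (Suc n)" "a * S n"] by (simp add: S_Suc algebra_simps)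
    also have "\<dots> \<le> a * exp (- a * S (Suc n)) * exp (a * S (Suc n))"
      using N[of "Suc n"] that \<open>a > 0\<close> by (intro mult_right_mono mult_left_mono) auto
    also have "\<dots> = a" by (simp flip: exp_add)
    finally show ?thesis .
  qed
  have linear: "exp (a * S n) \<le> exp (a * S N) + a * (real n - real N)" if "n \<ge> N" for n
    using step that by (rule bounded_increments_imp_le_linear)
  define K where "K = exp (a * S N) + a"
  have "a * S n \<le> ln (real n) + ln K" if "n \<ge> max N 1" for n
  proof -
    have "exp (a * S n) \<le> K * real n"
    proof -
      have "exp (a * S N) * 1 \<le> exp (a * S N) * real n" using that by (intro mult_left_mono) auto
      moreover have "0 \<le> a * real N" using \<open>a > 0\<close> by simp
      moreover have "exp (a * S n) \<le> exp (a * S N) + a * (real n - real N)"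
        using linear that by simp
      ultimately show ?thesis unfolding K_def distrib_right right_diff_distrib by linarith
    qed
    moreover have "K > 0" using \<open>a > 0\<close> by (simp add: K_def add_pos_pos)
    ultimately have "a * S n \<le> ln (K * real n)" using that by (subst ln_ge_iff) auto
    also have "\<dots> = ln (real n) + ln K" using \<open>K > 0\<close> that by (simp add: ln_mult)
    finally show ?thesis .
  qed
  then have "eventually (\<lambda>n. a * S n \<le> ln (real n) + ln K) sequentially"
    unfolding eventually_sequentially by blast
  then show ?thesis ..
qed

lemma partial_sums_lower_ln_bound:
  fixes y S :: "nat \<Rightarrow> real"
  assumes "a > 0" and S_Suc: "\<And>n. S (Suc n) = S n + y (Suc n)"
    and "eventually (\<lambda>n. exp (- a * S n) \<le> y n \<and> y n \<le> 1) sequentially"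
  shows "\<exists>C. eventually (\<lambda>n. ln (real n) + C \<le> a * S n) sequentially"
proof -
  obtain N where N: "\<And>n. n \<ge> N \<Longrightarrow> exp (- a * S n) \<le> y n \<and> y n \<le> 1"
    using assms(3) by (auto simp: eventually_sequentially)
  define d where "d = a * exp (- a)"
  have step: "d \<le> exp (a * S (Suc n)) - exp (a * S n)" if "n \<ge> N" for n
  proof -
    have "1 = exp (- a * S (Suc n)) * exp (a * S (Suc n))" by (simp flip: exp_add)
    also have "\<dots> \<le> y (Suc n) * exp (a * S (Suc n))"
      using N[of "Suc n"] that by (intro mult_right_mono) auto
    finally have "1 \<le> y (Suc n) * exp (a * S (Suc n))" .
    moreover have "exp (- a) \<le> exp (- a * y (Suc n))"
      using N[of "Suc n"] that \<open>a > 0\<close> by simp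
    ultimately have "d \<le> a * (y (Suc n) * exp (a * S (Suc n))) * exp (- a * y (Suc n))"
      unfolding d_def using \<open>a > 0\<close> by (intro mult_mono mult_left_mono) auto
    also have "\<dots> = a * y (Suc n) * exp (a * S n)"
      by (simp add: S_Suc algebra_simps flip: exp_add)
    also have "\<dots> \<le> exp (a * S (Suc n)) - exp (a * S n)"
      using exp_diff_le_mult_exp[of "a * S n" "a * S (Suc n)"] by (simp add: S_Suc algebra_simps)
    finally show ?thesis .
  qed
  have linear: "d * (real n - real N) \<le> exp (a * S n)" if "n \<ge> N" for n
  proof -
    have "- exp (a * S n) \<le> - exp (a * S N) + - d * (real n - real N)"
      using step that by (intro bounded_increments_imp_le_linear[where f = "\<lambda>n. - exp (a * S n)"]) force+
    then show ?thesis using exp_gt_zero[of "a * S N"] by linarith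
  qed
  have "d > 0" using \<open>a > 0\<close> by (simp add: d_def)
  have "ln (real n) + ln (d / 2) \<le> a * S n" if "n \<ge> max (2 * N) 1" for n
  proof -
    have "d * real N \<le> d * (real n / 2)"
      using that \<open>d > 0\<close> by (intro mult_left_mono) auto
    then have "d / 2 * real n \<le> d * (real n - real N)"
      by (simp add: algebra_simps)
    also have "\<dots> \<le> exp (a * S n)" using linear that by simp
    finally have "d / 2 * real n \<le> exp (a * S n)" .
    have "ln (real n) + ln (d / 2) = ln (d / 2 * real n)"
      using that \<open>d > 0\<close> by (subst ln_mult) auto
    also have "\<dots> \<le> ln (exp (a * S n))"
      using \<open>d / 2 * real n \<le> exp (a * S n)\<close> that \<open>d > 0\<close> by (subst ln_le_cancel_iff) auto
    finally show ?thesis by simp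
  qed
  then have "eventually (\<lambda>n. ln (real n) + ln (d / 2) \<le> a * S n) sequentially"
    unfolding eventually_sequentially by blast
  then show ?thesis ..
qed

lemma tendsto_div_ln_of_ln_bounds:
  fixes S :: "nat \<Rightarrow> real"
  assumes "c > 0"
    and upper: "\<And>a. 0 < a \<Longrightarrow> a < c \<Longrightarrow> \<exists>C. eventually (\<lambda>n. a * S n \<le> ln (real n) + C) sequentially"
    and lower: "\<And>a. c < a \<Longrightarrow> \<exists>C. eventually (\<lambda>n. ln (real n) + C \<le> a * S n) sequentially"
  shows "(\<lambda>n. S n / ln (real n)) \<longlonglongrightarrow> 1 / c"
proof (rule order_tendstoI)
  fix u assume "1 / c < u"
  then obtain t where t: "1 / c < t" "t < u" using dense by blast
  have "t > 0" using t(1) \<open>c > 0\<close> by (meson divide_pos_pos less_trans zero_less_one)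
  then have "0 < 1 / t" "1 / t < c" "1 / (1 / t) < u" using t \<open>c > 0\<close> by (simp_all add: field_simps)
  then obtain a where a: "0 < a" "a < c" "1 / a < u" by blast
  then obtain C where C: "eventually (\<lambda>n. a * S n \<le> ln (real n) + C) sequentially"
    using upper by blast
  have "eventually (\<lambda>n. (ln (real n) + C) / (a * ln (real n)) < u) sequentially"
    using order_tendstoD(2)[OF tendsto_ln_plus_const_div_ln] a by simp
  with C eventually_gt_at_top[of 1]
  show "eventually (\<lambda>n. S n / ln (real n) < u) sequentially"
  proof eventually_elim
    case (elim n)
    then have "ln (real n) > 0" by simp
    have "S n / ln (real n) = a * S n / (a * ln (real n))" using a by simp
    also have "\<dots> \<le> (ln (real n) + C) / (a * ln (real n))"
      using elim(1) \<open>ln (real n) > 0\<close> a by (intro divide_right_mono) auto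
    finally show ?case using elim(3) by linarith
  qed
next
  fix l assume "l < 1 / c"
  moreover have "0 < 1 / c" using \<open>c > 0\<close> by simp
  ultimately obtain t where t: "max l 0 < t" "t < 1 / c" using dense by (metis max_less_iff_conj)
  then have "c < 1 / t" "l < 1 / (1 / t)" using \<open>c > 0\<close> by (simp_all add: field_simps)
  then obtain a where a: "c < a" "l < 1 / a" by blast
  have "0 < a" using a(1) \<open>c > 0\<close> by simp
  obtain C where C: "eventually (\<lambda>n. ln (real n) + C \<le> a * S n) sequentially"
    using lower a(1) by blast
  have "eventually (\<lambda>n. l < (ln (real n) + C) / (a * ln (real n))) sequentially"
    using order_tendstoD(1)[OF tendsto_ln_plus_const_div_ln] a \<open>0 < a\<close> by simp
  with C eventually_gt_at_top[of 1]
  show "eventually (\<lambda>n. l < S n / ln (real n)) sequentially"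
  proof eventually_elim
    case (elim n)
    then have "ln (real n) > 0" by simp
    have "(ln (real n) + C) / (a * ln (real n)) \<le> a * S n / (a * ln (real n))"
      using elim(1) \<open>ln (real n) > 0\<close> \<open>0 < a\<close> by (intro divide_right_mono) auto
    also have "\<dots> = S n / ln (real n)" using \<open>0 < a\<close> by simp
    finally show ?case using elim(3) by linarith
  qed
qed

lemma partial_sums_div_ln_tendsto:
  fixes y S :: "nat \<Rightarrow> real"
  assumes "c > 0" and S_Suc: "\<And>n. S (Suc n) = S n + y (Suc n)"
    and y_pos: "eventually (\<lambda>n. 0 < y n) sequentially"
    and y_le_1: "eventually (\<lambda>n. y n \<le> 1) sequentially"
    and lim: "(\<lambda>n. ln (y n) / S n) \<longlonglongrightarrow> - c"
  shows "(\<lambda>n. S n / ln (real n)) \<longlonglongrightarrow> 1 / c"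
proof -
  have "eventually (\<lambda>n. ln (y n) / S n < 0) sequentially"
    using order_tendstoD(2)[OF lim] \<open>c > 0\<close> by simp
  then have S_pos: "eventually (\<lambda>n. 0 < S n) sequentially"
    using y_pos y_le_1
  proof eventually_elim
    case (elim n)
    then have "ln (y n) \<le> 0" by simp
    then show ?case using elim(1) by (metis divide_nonpos_nonpos linorder_not_le order_less_irrefl)
  qed
  show ?thesis
  proof (rule tendsto_div_ln_of_ln_bounds[OF \<open>c > 0\<close>])
    fix a
    assume "0 < a" "a < c"
    have "eventually (\<lambda>n. ln (y n) / S n < - a) sequentially"
      using order_tendstoD(2)[OF lim] \<open>a < c\<close> by simp
    then have "eventually (\<lambda>n. y n \<le> exp (- a * S n)) sequentially"
      using S_pos y_pos
    proof eventually_elim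
      case (elim n)
      then have "ln (y n) \<le> - a * S n" by (simp add: pos_divide_less_eq)
      then have "exp (ln (y n)) \<le> exp (- a * S n)" by simp
      then show ?case using elim(3) by simp
    qed
    then show "\<exists>C. eventually (\<lambda>n. a * S n \<le> ln (real n) + C) sequentially"
      using partial_sums_upper_ln_bound[where y = y and S = S, OF \<open>0 < a\<close> S_Suc] by blast
  next
    fix a
    assume "c < a"
    have "eventually (\<lambda>n. - a < ln (y n) / S n) sequentially"
      using order_tendstoD(1)[OF lim] \<open>c < a\<close> by simp
    then have "eventually (\<lambda>n. exp (- a * S n) \<le> y n \<and> y n \<le> 1) sequentially"
      using S_pos y_pos y_le_1
    proof eventually_elim
      case (elim n)
      then have "- a * S n \<le> ln (y n)" by (simp add: pos_less_divide_eq)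
      then show ?case using elim(3,4) by (simp add: ln_ge_iff)
    qed
    moreover have "0 < a" using \<open>c > 0\<close> \<open>c < a\<close> by simp
    ultimately show "\<exists>C. eventually (\<lambda>n. ln (real n) + C \<le> a * S n) sequentially"
      using partial_sums_lower_ln_bound[where y = y and S = S, OF _ S_Suc] by blast
  qed
qed

theorem lemma8:
  fixes x :: "nat \<Rightarrow> real" and lambda b :: real
  assumes "lambda > 0"
    and "\<And>n. n \<ge> 1 \<Longrightarrow> x n > 0"
    and "x \<longlonglongrightarrow> 0"
    and "b > 0"
    and "(\<lambda>n. ln (x n) / (\<Sum>i=1..n. x i powr lambda)) \<longlonglongrightarrow> - b"
  shows "(\<lambda>n. ln (x n) / ln (real n)) \<longlonglongrightarrow> - 1 / lambda"
proof -
  define y where "y n = x n powr lambda" for n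
  define S where "S n = (\<Sum>i=1..n. y i)" for n
  have S_Suc: "S (Suc n) = S n + y (Suc n)" for n
    by (simp add: S_def)
  have x_pos: "eventually (\<lambda>n. 0 < x n) sequentially"
    using eventually_ge_at_top[of 1] by eventually_elim (rule assms(2))
  then have y_pos: "eventually (\<lambda>n. 0 < y n) sequentially"
    by eventually_elim (simp add: y_def)
  have "y \<longlonglongrightarrow> 0"
    unfolding y_def using x_pos assms(1,3)
    by (intro tendsto_zero_powrI tendsto_const) (auto elim: eventually_mono)
  then have "eventually (\<lambda>n. y n < 1) sequentially"
    by (rule order_tendstoD(2)) simp
  then have y_le_1: "eventually (\<lambda>n. y n \<le> 1) sequentially"
    by eventually_elim simp
  have S_pos: "eventually (\<lambda>n. 0 < S n) sequentially"
    using eventually_ge_at_top[of 1]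
    by eventually_elim (auto simp: S_def y_def intro!: sum_pos less_imp_neq[OF assms(2), symmetric])
  have "(\<lambda>n. lambda * (ln (x n) / S n)) \<longlonglongrightarrow> lambda * - b"
    using tendsto_mult[OF tendsto_const assms(5)] by (simp add: S_def y_def)
  moreover have "eventually (\<lambda>n. lambda * (ln (x n) / S n) = ln (y n) / S n) sequentially"
    using x_pos by eventually_elim (simp add: y_def ln_powr)
  ultimately have "(\<lambda>n. ln (y n) / S n) \<longlonglongrightarrow> - (lambda * b)"
    by (auto intro: Lim_transform_eventually)
  with assms(1,4) S_Suc y_pos y_le_1
  have "(\<lambda>n. S n / ln (real n)) \<longlonglongrightarrow> 1 / (lambda * b)"
    by (intro partial_sums_div_ln_tendsto) auto
  with assms(5) have "(\<lambda>n. ln (x n) / S n * (S n / ln (real n))) \<longlonglongrightarrow> - b * (1 / (lambda * b))"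
    by (intro tendsto_mult) (simp_all add: S_def y_def)
  moreover have "eventually (\<lambda>n. ln (x n) / S n * (S n / ln (real n)) = ln (x n) / ln (real n)) sequentially"
    using S_pos by eventually_elim simp
  ultimately have "(\<lambda>n. ln (x n) / ln (real n)) \<longlonglongrightarrow> - b * (1 / (lambda * b))"
    by (rule Lim_transform_eventually)
  then show ?thesis using assms(4) by simp
qed

end
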